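(* Let $a<b$ be real numbers and let $\eta\in\mathcal{C}^{1}[a,b]$ be a real function with $\eta'(a)\neq\eta'(b)$. For parameters $\alpha,\beta,\kappa$ define the modified, dampened function $$\eta^{\alpha}_{\beta,\kappa}(x)=e^{-\alpha x}\bigl(\eta(x)+\beta x+\kappa\bigr),\qquad x\in[a,b].$$ Then for any $\beta\notin\{-\eta'(a),-\eta'(b)\}$, the choices $$\alpha=\frac{1}{b-a}\log\left(\frac{\eta'(b)+\beta}{\eta'(a)+\beta}\right),\qquad \kappa=\frac{e^{-\alpha b}\bigl(\eta(b)+\beta b\bigr)-e^{-\alpha a}\bigl(\eta(a)+\beta a\bigr)}{e^{-\alpha a}-e^{-\alpha b}}$$ solve the system of (nonlinear) equations $$\eta^{\alpha}_{\beta,\kappa}(a)=\eta^{\alpha}_{\beta,\kappa}(b),\qquad \frac{d\eta^{\alpha}_{\beta,\kappa}}{dx}(a)=\frac{d\eta^{\alpha}_{\beta,\kappa}}{dx}(b).$$ In addition, if $\beta>\max\bigl(|\eta'(b)|,|\eta'(a)|\bigr)$, then $\alpha\in\mathbb{R}$ and $\kappa\in\mathbb{R}$.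
   Context: Here $\log$ denotes a (possibly complex) logarithm; when the ratio inside it is not a positive real number, $\alpha$ (and hence $\kappa$) may be complex. *)

theory Defs
  imports "HOL-Analysis.Analysis"
begin

text \<open>The modified, dampened function
  eta^alpha_{beta,kappa}(x) = exp(-alpha x) (eta(x) + beta x + kappa),
  complex-valued since alpha and kappa may be complex.\<close>
definition damped :: "(real \<Rightarrow> real) \<Rightarrow> complex \<Rightarrow> real \<Rightarrow> complex \<Rightarrow> real \<Rightarrow> complex" where
  "damped \<eta> \<alpha> \<beta> \<kappa> x =
     exp (- \<alpha> * complex_of_real x) * (complex_of_real (\<eta> x + \<beta> * x) + \<kappa>)"

end

theory Submission
  imports Defs
begin

text \<open>The derivative of the damped function is \<open>exp(-\<alpha> x) (\<eta>'(x) + \<beta>) - \<alpha> \<cdot> damped(x)\<close>.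
  Choosing \<open>exp(\<alpha> (b - a)) = (\<eta>'(b) + \<beta>) / (\<eta>'(a) + \<beta>)\<close> makes the first term agree at
  \<open>a\<close> and \<open>b\<close>, so equal derivatives follow from equal values, which is a linear equation in
  \<open>\<kappa>\<close>; it is solvable because that ratio is not 1, i.e. \<open>exp(-\<alpha> a) \<noteq> exp(-\<alpha> b)\<close>.
  For large \<open>\<beta>\<close> the ratio is positive, so its logarithm is real.\<close>

lemma damped_has_vector_derivative:
  assumes "(\<eta> has_real_derivative e) (at x within S)"
  shows "(damped \<eta> \<alpha> \<beta> \<kappa> has_vector_derivative
            exp (- \<alpha> * complex_of_real x) * complex_of_real (e + \<beta>) - \<alpha> * damped \<eta> \<alpha> \<beta> \<kappa> x)
           (at x within S)"
proof -
  have "((\<lambda>x. exp (- \<alpha> * complex_of_real x)) has_vector_derivative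
          exp (- \<alpha> * complex_of_real x) * (- \<alpha>)) (at x within S)"
    by (rule has_vector_derivative_real_field) (auto intro!: derivative_eq_intros)
  moreover have "((\<lambda>x. complex_of_real (\<eta> x + \<beta> * x) + \<kappa>) has_vector_derivative
                   complex_of_real (e + \<beta>)) (at x within S)"
    by (auto intro!: derivative_eq_intros assms)
  ultimately show ?thesis
    unfolding damped_def[abs_def]
    by (rule has_vector_derivative_mult[THEN has_vector_derivative_eq_rhs]) (simp add: algebra_simps)
qed

lemma damped_eq_endpoints:
  assumes "exp (- \<alpha> * complex_of_real a) \<noteq> exp (- \<alpha> * complex_of_real b)"
    and "\<kappa> = (exp (- \<alpha> * complex_of_real b) * complex_of_real (\<eta> b + \<beta> * b)
              - exp (- \<alpha> * complex_of_real a) * complex_of_real (\<eta> a + \<beta> * a))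
             / (exp (- \<alpha> * complex_of_real a) - exp (- \<alpha> * complex_of_real b))"
  shows "damped \<eta> \<alpha> \<beta> \<kappa> a = damped \<eta> \<alpha> \<beta> \<kappa> b"
  using assms by (simp add: damped_def field_simps)

lemma damped_equal_slopes_at_endpoints:
  assumes "(\<eta> has_real_derivative e\<^sub>a) (at a within S)" "(\<eta> has_real_derivative e\<^sub>b) (at b within S)"
    and "exp (- \<alpha> * complex_of_real a) * complex_of_real (e\<^sub>a + \<beta>)
         = exp (- \<alpha> * complex_of_real b) * complex_of_real (e\<^sub>b + \<beta>)"
    and "damped \<eta> \<alpha> \<beta> \<kappa> a = damped \<eta> \<alpha> \<beta> \<kappa> b"
  shows "\<exists>d. (damped \<eta> \<alpha> \<beta> \<kappa> has_vector_derivative d) (at a within S)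
           \<and> (damped \<eta> \<alpha> \<beta> \<kappa> has_vector_derivative d) (at b within S)"
  using assms(1,2)[THEN damped_has_vector_derivative, of \<alpha> \<beta> \<kappa>] assms(3,4) by auto

lemma exp_neg_mult_Ln_ratio:
  fixes a b p q :: real
  assumes "p \<noteq> 0" "q \<noteq> 0" "a \<noteq> b"
  defines "\<alpha> \<equiv> Ln (complex_of_real (q / p)) / complex_of_real (b - a)"
  shows "exp (- \<alpha> * complex_of_real a) * complex_of_real p = exp (- \<alpha> * complex_of_real b) * complex_of_real q"
proof -
  have "\<alpha> * complex_of_real (b - a) = Ln (complex_of_real (q / p))"
    using assms by (simp add: \<alpha>_def)
  then have "exp (\<alpha> * complex_of_real (b - a)) = complex_of_real (q / p)"
    using assms by simp
  moreover have "exp (- \<alpha> * complex_of_real a)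
      = exp (\<alpha> * complex_of_real (b - a)) * exp (- \<alpha> * complex_of_real b)"
    by (simp add: exp_add[symmetric] algebra_simps)
  ultimately show ?thesis
    using assms by (simp add: field_simps)
qed

lemma exp_neg_mult_real_in_Reals:
  "\<alpha> \<in> \<real> \<Longrightarrow> exp (- \<alpha> * complex_of_real x) \<in> \<real>"
  by (auto elim!: Reals_cases simp flip: of_real_mult of_real_minus exp_of_real)

theorem lemma1:
  fixes \<eta> \<eta>' :: "real \<Rightarrow> real" and a b \<beta> :: real
  assumes "a < b"
    and deriv: "\<And>x. x \<in> {a..b} \<Longrightarrow> (\<eta> has_real_derivative \<eta>' x) (at x within {a..b})"
    and cont: "continuous_on {a..b} \<eta>'"
    and neq: "\<eta>' a \<noteq> \<eta>' b"
    and beta: "\<beta> \<noteq> - \<eta>' a" "\<beta> \<noteq> - \<eta>' b"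
  defines "\<alpha> \<equiv> Ln (complex_of_real ((\<eta>' b + \<beta>) / (\<eta>' a + \<beta>))) / complex_of_real (b - a)"
  defines "\<kappa> \<equiv> (exp (- \<alpha> * complex_of_real b) * complex_of_real (\<eta> b + \<beta> * b)
                 - exp (- \<alpha> * complex_of_real a) * complex_of_real (\<eta> a + \<beta> * a))
               / (exp (- \<alpha> * complex_of_real a) - exp (- \<alpha> * complex_of_real b))"
  shows "damped \<eta> \<alpha> \<beta> \<kappa> a = damped \<eta> \<alpha> \<beta> \<kappa> b
      \<and> (\<exists>d. (damped \<eta> \<alpha> \<beta> \<kappa> has_vector_derivative d) (at a within {a..b})
             \<and> (damped \<eta> \<alpha> \<beta> \<kappa> has_vector_derivative d) (at b within {a..b}))
      \<and> (\<beta> > max \<bar>\<eta>' b\<bar> \<bar>\<eta>' a\<bar> \<longrightarrow> \<alpha> \<in> \<real> \<and> \<kappa> \<in> \<real>)"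
proof -
  have slopes: "\<eta>' a + \<beta> \<noteq> 0" "\<eta>' b + \<beta> \<noteq> 0"
    using beta by auto
  have balance: "exp (- \<alpha> * complex_of_real a) * complex_of_real (\<eta>' a + \<beta>)
               = exp (- \<alpha> * complex_of_real b) * complex_of_real (\<eta>' b + \<beta>)"
    using exp_neg_mult_Ln_ratio[OF slopes] \<open>a < b\<close> by (simp add: \<alpha>_def)
  have "exp (- \<alpha> * complex_of_real a) \<noteq> exp (- \<alpha> * complex_of_real b)"
    using balance neq by auto
  then have equal_values: "damped \<eta> \<alpha> \<beta> \<kappa> a = damped \<eta> \<alpha> \<beta> \<kappa> b"
    by (rule damped_eq_endpoints) (simp add: \<kappa>_def)
  moreover have "\<exists>d. (damped \<eta> \<alpha> \<beta> \<kappa> has_vector_derivative d) (at a within {a..b})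
                  \<and> (damped \<eta> \<alpha> \<beta> \<kappa> has_vector_derivative d) (at b within {a..b})"
    using deriv \<open>a < b\<close> balance equal_values by (intro damped_equal_slopes_at_endpoints) auto
  moreover have "\<alpha> \<in> \<real> \<and> \<kappa> \<in> \<real>" if "\<beta> > max \<bar>\<eta>' b\<bar> \<bar>\<eta>' a\<bar>"
  proof -
    have "(\<eta>' b + \<beta>) / (\<eta>' a + \<beta>) > 0"
      using that by (auto intro!: divide_pos_pos)
    then have "\<alpha> \<in> \<real>"
      by (simp add: \<alpha>_def flip: Ln_of_real)
    then show ?thesis
      by (simp add: \<kappa>_def exp_neg_mult_real_in_Reals)
  qed
  ultimately show ?thesis
    by blast
qed

end
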